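(* Let $\mathring{\mathcal{M}}$ denote the linear space of real symmetric trace-free $2\times2$ matrices, and let $$\Lambda = \Big\{\tfrac15(3e_1\pm 4e_2),\ \tfrac15(4e_1\pm 3e_2),\ \tfrac15(-3e_1\mp 4e_2),\ \tfrac15(-4e_1\mp 3e_2)\Big\}\subset\mathbb{S}^1.$$ There exists a family of positive smooth functions $\{\gamma_k\in C^\infty(\mathring{\mathcal{M}}) : k\in\Lambda\}$ such that for every $\mathring{R}\in\mathring{\mathcal{M}}$: $$\gamma_{-k}(\mathring{R}) = \gamma_k(\mathring{R}),\qquad \mathring{R} = \sum_{k\in\Lambda}(\gamma_k(\mathring{R}))^2\,(k\mathring{\otimes} k),\qquad \gamma_k(\mathring{R}) \le C(1+|\mathring{R}|)^{1/2}$$ for all $k\in\Lambda$, where $C$ is an absolute constant.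
   Context: For $f,g\in\mathbb{R}^2$, $f\mathring{\otimes} g$ denotes the trace-free part of the tensor product: $f\mathring{\otimes} g = \begin{pmatrix}\frac12 f_1g_1-\frac12 f_2g_2 & f_1g_2\\ f_2g_1 & \frac12 f_2g_2-\frac12 f_1g_1\end{pmatrix}$. $e_1,e_2$ are the standard basis vectors of $\mathbb{R}^2$. *)

theory Defs
  imports "HOL-Analysis.Analysis"
begin

text \<open>Trace-free part of the tensor product of two vectors in R^2 (as in the paper).\<close>
definition tf_tensor :: "real^2 \<Rightarrow> real^2 \<Rightarrow> real^2^2" where
  "tf_tensor f g = (\<chi> i j.
     if i = 1 \<and> j = 1 then (f$1*g$1 - f$2*g$2)/2
     else if i = 1 \<and> j = 2 then f$1*g$2
     else if i = 2 \<and> j = 1 then f$2*g$1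
     else (f$2*g$2 - f$1*g$1)/2)"

definition Msymtf :: "(real^2^2) set" where
  "Msymtf = {R. transpose R = R \<and> trace R = 0}"

definition vec2 :: "real \<Rightarrow> real \<Rightarrow> real^2" where
  "vec2 a b = (\<chi> i. if i = 1 then a else b)"

definition Lambda :: "(real^2) set" where
  "Lambda = {vec2 (3/5) (4/5), vec2 (3/5) (-4/5), vec2 (4/5) (3/5), vec2 (4/5) (-3/5),
             vec2 (-3/5) (-4/5), vec2 (-3/5) (4/5), vec2 (-4/5) (-3/5), vec2 (-4/5) (3/5)}"

fun ddir :: "('a::real_normed_vector \<Rightarrow> real) \<Rightarrow> 'a list \<Rightarrow> 'a \<Rightarrow> real" where
  "ddir f [] = f"
| "ddir f (v # vs) = (\<lambda>x. deriv (\<lambda>t. ddir f vs (x + t *\<^sub>R v)) 0)"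

text \<open>C-infinity on a linear subspace S: all iterated directional derivatives along
  directions in S exist on S and are continuous on S.\<close>
definition smooth_on_subspace :: "'a::real_normed_vector set \<Rightarrow> ('a \<Rightarrow> real) \<Rightarrow> bool" where
  "smooth_on_subspace S f \<longleftrightarrow>
     (\<forall>vs. set vs \<subseteq> S \<longrightarrow>
        continuous_on S (ddir f vs) \<and>
        (\<forall>v\<in>S. \<forall>x\<in>S. (\<lambda>t. ddir f vs (x + t *\<^sub>R v)) differentiable (at 0)))"

end

theory Submission
  imports Defs
begin

(* For k in Lambda, tf_tensor k k has entries c = (k1^2 - k2^2)/2 and s = k1 k2 with |c| = 7/50 and
   |s| = 12/25, and each sign pattern of (c, s) occurs for two k. Hence these eight tensors sum to zero
   and their second-moment matrix is diagonal, so coefficients frame_coeff k R, linear in R, reproduce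
   every symmetric trace-free R. Adding the same shift 2 sqrt (1 + R11^2 + R12^2), which dominates every
   |frame_coeff k R| and grows like |R|, keeps the identity and makes all coefficients positive; gamma k
   is their square root. Smoothness holds because gamma k is built by sums, products and positive real
   powers from linear functions, a class closed under directional derivatives. *)

inductive elementary_smooth :: "('a::real_normed_vector \<Rightarrow> real) \<Rightarrow> bool" where
  const: "elementary_smooth (\<lambda>x. c)"
| linear: "bounded_linear L \<Longrightarrow> elementary_smooth L"
| add: "elementary_smooth f \<Longrightarrow> elementary_smooth g \<Longrightarrow> elementary_smooth (\<lambda>x. f x + g x)"
| mult: "elementary_smooth f \<Longrightarrow> elementary_smooth g \<Longrightarrow> elementary_smooth (\<lambda>x. f x * g x)"
| powr: "elementary_smooth f \<Longrightarrow> (\<forall>x. 0 < f x) \<Longrightarrow> elementary_smooth (\<lambda>x. f x powr r)"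

lemma has_derivative_powr_const:
  fixes f :: "'a::real_normed_vector \<Rightarrow> real"
  assumes "(f has_derivative f') (at x)" and "0 < f x"
  shows "((\<lambda>x. f x powr r) has_derivative (\<lambda>h. r * f x powr (r - 1) * f' h)) (at x)"
proof (rule has_derivative_eq_rhs[OF has_derivative_powr[OF assms(1) has_derivative_const]])
  show "(\<lambda>h. f x powr r * (0 * ln (f x) + f' h * r / f x)) = (\<lambda>h. r * f x powr (r - 1) * f' h)"
    using assms(2) by (simp add: powr_diff mult_ac)
qed (use assms in auto)

lemma elementary_smooth_has_derivative:
  assumes "elementary_smooth f"
  shows "\<exists>f'. (\<forall>x. (f has_derivative f' x) (at x)) \<and> (\<forall>v. elementary_smooth (\<lambda>x. f' x v))"
  using assms
proof (induction rule: elementary_smooth.induct)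
  case (const c)
  show ?case
    by (auto intro!: exI[of _ "\<lambda>x h. 0"] elementary_smooth.const)
next
  case (linear L)
  then show ?case
    by (auto intro!: exI[of _ "\<lambda>x. L"] elementary_smooth.const bounded_linear_imp_has_derivative)
next
  case (add f g)
  then obtain f' g' where
    "\<forall>x. (f has_derivative f' x) (at x)" "\<forall>v. elementary_smooth (\<lambda>x. f' x v)"
    "\<forall>x. (g has_derivative g' x) (at x)" "\<forall>v. elementary_smooth (\<lambda>x. g' x v)"
    by blast
  then show ?case
    by (auto intro!: exI[of _ "\<lambda>x h. f' x h + g' x h"] has_derivative_add elementary_smooth.add)
next
  case (mult f g)
  then obtain f' g' where
    "\<forall>x. (f has_derivative f' x) (at x)" "\<forall>v. elementary_smooth (\<lambda>x. f' x v)"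
    "\<forall>x. (g has_derivative g' x) (at x)" "\<forall>v. elementary_smooth (\<lambda>x. g' x v)"
    by blast
  with mult.hyps show ?case
    by (auto intro!: exI[of _ "\<lambda>x h. f x * g' x h + f' x h * g x"] has_derivative_mult
        elementary_smooth.add elementary_smooth.mult)
next
  case (powr f r)
  then obtain f' where
    "\<forall>x. (f has_derivative f' x) (at x)" "\<forall>v. elementary_smooth (\<lambda>x. f' x v)"
    by blast
  with powr.hyps show ?case
    by (auto intro!: exI[of _ "\<lambda>x h. r * f x powr (r - 1) * f' x h"] has_derivative_powr_const
        elementary_smooth.mult elementary_smooth.const elementary_smooth.powr)
qed

lemma elementary_smooth_line_derivative:
  assumes "elementary_smooth f"
  shows "\<exists>f'. elementary_smooth f' \<and>
    (\<forall>x. ((\<lambda>t. f (x + t *\<^sub>R v)) has_real_derivative f' x) (at 0))"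
proof -
  obtain g where g: "\<forall>x. (f has_derivative g x) (at x)" "\<forall>v. elementary_smooth (\<lambda>x. g x v)"
    using elementary_smooth_has_derivative[OF assms] by blast
  have "((\<lambda>t. f (x + t *\<^sub>R v)) has_real_derivative g x v) (at 0)" for x
  proof -
    have "((\<lambda>t. x + t *\<^sub>R v) has_derivative (\<lambda>t. t *\<^sub>R v)) (at 0)"
      by (auto intro!: derivative_eq_intros)
    then have "((\<lambda>t. f (x + t *\<^sub>R v)) has_derivative (\<lambda>t. g x (t *\<^sub>R v))) (at 0)"
      using has_derivative_compose[of "\<lambda>t. x + t *\<^sub>R v" "\<lambda>t. t *\<^sub>R v" 0 UNIV f "g x"] g(1)
      by (simp add: o_def)
    moreover have "(\<lambda>t. g x (t *\<^sub>R v)) = (*) (g x v)"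
      using has_derivative_linear[OF g(1)[rule_format]] by (auto simp: linear_scale)
    ultimately show ?thesis
      by (simp add: has_field_derivative_def)
  qed
  with g(2) show ?thesis by blast
qed

lemma elementary_smooth_ddir: "elementary_smooth f \<Longrightarrow> elementary_smooth (ddir f vs)"
proof (induction vs)
  case Nil
  then show ?case by simp
next
  case (Cons v vs)
  then obtain f' where "elementary_smooth f'"
    and "\<forall>x. ((\<lambda>t. ddir f vs (x + t *\<^sub>R v)) has_real_derivative f' x) (at 0)"
    using elementary_smooth_line_derivative by blast
  moreover from this(2) have "ddir f (v # vs) = f'"
    by (simp add: DERIV_imp_deriv fun_eq_iff)
  ultimately show ?case by simp
qed

lemma elementary_smooth_imp_smooth_on_subspace:
  assumes "elementary_smooth f"
  shows "smooth_on_subspace S f"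
  unfolding smooth_on_subspace_def
proof (intro allI impI conjI ballI)
  fix vs :: "'a list" and v x
  have "elementary_smooth (ddir f vs)"
    using assms by (rule elementary_smooth_ddir)
  then show "continuous_on S (ddir f vs)"
    by (metis elementary_smooth_has_derivative has_derivative_continuous continuous_at_imp_continuous_on)
  show "(\<lambda>t. ddir f vs (x + t *\<^sub>R v)) differentiable (at 0)"
    using elementary_smooth_line_derivative[OF \<open>elementary_smooth (ddir f vs)\<close>, of v]
    by (auto simp: real_differentiable_def)
qed

lemma elementary_smooth_sqrt:
  assumes "elementary_smooth f" and "\<And>x. 0 < f x"
  shows "elementary_smooth (\<lambda>x. sqrt (f x))"
proof -
  have "elementary_smooth (\<lambda>x. f x powr (1/2))"
    using assms by (simp add: elementary_smooth.powr)
  moreover have "(\<lambda>x. f x powr (1/2)) = (\<lambda>x. sqrt (f x))"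
    using assms(2) by (simp add: powr_half_sqrt less_imp_le)
  ultimately show ?thesis by simp
qed

lemma elementary_smooth_entry: "elementary_smooth (\<lambda>A :: real^'n^'m. A $ i $ j)"
  by (intro elementary_smooth.linear bounded_linear_compose[OF bounded_linear_vec_nth bounded_linear_vec_nth])

lemma vec2_nth [simp]: "vec2 a b $ 1 = a" "vec2 a b $ 2 = b"
  by (simp_all add: vec2_def)

lemma vec2_eq_iff [simp]: "vec2 a b = vec2 c d \<longleftrightarrow> a = c \<and> b = d"
  by (auto simp: vec_eq_iff forall_2)

lemma sum_Lambda:
  "sum F Lambda =
     F (vec2 (3/5) (4/5)) + F (vec2 (3/5) (-4/5)) + F (vec2 (4/5) (3/5)) + F (vec2 (4/5) (-3/5)) +
     F (vec2 (-3/5) (-4/5)) + F (vec2 (-3/5) (4/5)) + F (vec2 (-4/5) (-3/5)) + F (vec2 (-4/5) (3/5))"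
  unfolding Lambda_def by (simp add: algebra_simps)

lemma tf_tensor_uminus [simp]: "tf_tensor (- f) (- g) = tf_tensor f g"
  unfolding tf_tensor_def by (simp only: vector_uminus_component minus_mult_minus)

lemma Msymtf_iff: "R \<in> Msymtf \<longleftrightarrow> R $ 2 $ 1 = R $ 1 $ 2 \<and> R $ 2 $ 2 = - R $ 1 $ 1"
  by (auto simp: Msymtf_def vec_eq_iff forall_2 transpose_def trace_def sum_2)

lemma subspace_Msymtf: "subspace Msymtf"
  by (auto simp: subspace_def Msymtf_iff)

lemma Msymtf_eqI:
  assumes "A \<in> Msymtf" "B \<in> Msymtf" "A $ 1 $ 1 = B $ 1 $ 1" "A $ 1 $ 2 = B $ 1 $ 2"
  shows "A = B"
  using assms by (simp add: Msymtf_iff vec_eq_iff forall_2)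

lemma tf_tensor_self_in_Msymtf: "tf_tensor f f \<in> Msymtf"
  by (simp add: Msymtf_iff tf_tensor_def field_simps)

lemma Lambda_tf_tensor_moments:
  "(\<Sum>k\<in>Lambda. tf_tensor k k $ 1 $ 1) = 0"
  "(\<Sum>k\<in>Lambda. tf_tensor k k $ 1 $ 2) = 0"
  "(\<Sum>k\<in>Lambda. (tf_tensor k k $ 1 $ 1)\<^sup>2) = 98/625"
  "(\<Sum>k\<in>Lambda. (tf_tensor k k $ 1 $ 2)\<^sup>2) = 1152/625"
  "(\<Sum>k\<in>Lambda. tf_tensor k k $ 1 $ 1 * tf_tensor k k $ 1 $ 2) = 0"
  by (simp_all add: sum_Lambda tf_tensor_def power2_eq_square)

lemma abs_tf_tensor_Lambda:
  assumes "k \<in> Lambda"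
  shows "\<bar>tf_tensor k k $ 1 $ 1\<bar> = 7/50" "\<bar>tf_tensor k k $ 1 $ 2\<bar> = 12/25"
  using assms by (auto simp: Lambda_def tf_tensor_def)

lemma sum_tf_tensor_Lambda: "(\<Sum>k\<in>Lambda. tf_tensor k k) = 0"
  by (rule Msymtf_eqI) (auto intro: subspace_sum[OF subspace_Msymtf] tf_tensor_self_in_Msymtf
      simp: subspace_0[OF subspace_Msymtf] Lambda_tf_tensor_moments)

(* The weights are the reciprocals of the second moments in Lambda_tf_tensor_moments. *)
definition frame_coeff :: "real^2 \<Rightarrow> real^2^2 \<Rightarrow> real" where
  "frame_coeff k R = 625/98 * tf_tensor k k $ 1 $ 1 * R $ 1 $ 1 + 625/1152 * tf_tensor k k $ 1 $ 2 * R $ 1 $ 2"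

lemma sum_frame_coeff_tf_tensor:
  assumes "R \<in> Msymtf"
  shows "(\<Sum>k\<in>Lambda. frame_coeff k R *\<^sub>R tf_tensor k k) = R"
proof (rule Msymtf_eqI[OF _ assms])
  show "(\<Sum>k\<in>Lambda. frame_coeff k R *\<^sub>R tf_tensor k k) \<in> Msymtf"
    by (intro subspace_sum[OF subspace_Msymtf] subspace_scale[OF subspace_Msymtf] tf_tensor_self_in_Msymtf)
  let ?c = "\<lambda>k. tf_tensor k k $ 1 $ 1" and ?s = "\<lambda>k. tf_tensor k k $ 1 $ 2"
  have "(\<Sum>k\<in>Lambda. frame_coeff k R * ?c k) =
      (\<Sum>k\<in>Lambda. 625/98 * R $ 1 $ 1 * (?c k)\<^sup>2 + 625/1152 * R $ 1 $ 2 * (?c k * ?s k))"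
    by (simp add: frame_coeff_def power2_eq_square algebra_simps)
  also have "\<dots> = R $ 1 $ 1"
    by (simp only: sum.distrib flip: sum_distrib_left) (simp add: Lambda_tf_tensor_moments)
  finally show "(\<Sum>k\<in>Lambda. frame_coeff k R *\<^sub>R tf_tensor k k) $ 1 $ 1 = R $ 1 $ 1"
    by simp
  have "(\<Sum>k\<in>Lambda. frame_coeff k R * ?s k) =
      (\<Sum>k\<in>Lambda. 625/98 * R $ 1 $ 1 * (?c k * ?s k) + 625/1152 * R $ 1 $ 2 * (?s k)\<^sup>2)"
    by (simp add: frame_coeff_def power2_eq_square algebra_simps)
  also have "\<dots> = R $ 1 $ 2"
    by (simp only: sum.distrib flip: sum_distrib_left) (simp add: Lambda_tf_tensor_moments)
  finally show "(\<Sum>k\<in>Lambda. frame_coeff k R *\<^sub>R tf_tensor k k) $ 1 $ 2 = R $ 1 $ 2"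
    by simp
qed

definition positivity_shift :: "real^2^2 \<Rightarrow> real" where
  "positivity_shift R = 2 * sqrt (1 + (R $ 1 $ 1)\<^sup>2 + (R $ 1 $ 2)\<^sup>2)"

lemma abs_frame_coeff_less_positivity_shift:
  assumes "k \<in> Lambda"
  shows "\<bar>frame_coeff k R\<bar> < positivity_shift R"
proof -
  define s where "s = sqrt (1 + (R $ 1 $ 1)\<^sup>2 + (R $ 1 $ 2)\<^sup>2)"
  have s: "\<bar>R $ 1 $ 1\<bar> \<le> s" "\<bar>R $ 1 $ 2\<bar> \<le> s" "1 \<le> s"
    unfolding s_def by (auto intro!: real_le_rsqrt)
  have "\<bar>frame_coeff k R\<bar> \<le>
      625/98 * \<bar>tf_tensor k k $ 1 $ 1\<bar> * \<bar>R $ 1 $ 1\<bar> + 625/1152 * \<bar>tf_tensor k k $ 1 $ 2\<bar> * \<bar>R $ 1 $ 2\<bar>"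
    unfolding frame_coeff_def by (rule order_trans[OF abs_triangle_ineq]) (simp add: abs_mult)
  also have "\<dots> = 25/28 * \<bar>R $ 1 $ 1\<bar> + 25/96 * \<bar>R $ 1 $ 2\<bar>"
    by (simp only: abs_tf_tensor_Lambda[OF assms])
  also have "\<dots> < 2 * s"
    using s by linarith
  finally show ?thesis
    unfolding positivity_shift_def s_def .
qed

lemma positivity_shift_le: "positivity_shift R \<le> 2 + 4 * norm R"
proof -
  have entry_le: "\<bar>R $ i $ j\<bar> \<le> norm R" for i j
    using component_le_norm_cart[of "R $ i" j] Finite_Cartesian_Product.norm_nth_le[of R i] by linarith
  have "positivity_shift R \<le> 2 * sqrt ((1 + \<bar>R $ 1 $ 1\<bar> + \<bar>R $ 1 $ 2\<bar>)\<^sup>2)"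
    unfolding positivity_shift_def by (simp add: power2_eq_square algebra_simps)
  also have "\<dots> = 2 * (1 + \<bar>R $ 1 $ 1\<bar> + \<bar>R $ 1 $ 2\<bar>)"
    by simp
  also have "\<dots> \<le> 2 + 4 * norm R"
    using entry_le[of 1 1] entry_le[of 1 2] by simp
  finally show ?thesis .
qed

lemma positivity_shift_add_frame_coeff_pos: "k \<in> Lambda \<Longrightarrow> 0 < positivity_shift R + frame_coeff k R"
  using abs_frame_coeff_less_positivity_shift[of k R] by (simp add: abs_less_iff)

definition gamma :: "real^2 \<Rightarrow> real^2^2 \<Rightarrow> real" where
  "gamma k R = sqrt (positivity_shift R + frame_coeff k R)"

lemma gamma_pos: "k \<in> Lambda \<Longrightarrow> 0 < gamma k R"
  using positivity_shift_add_frame_coeff_pos by (simp add: gamma_def)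

lemma gamma_squared: "k \<in> Lambda \<Longrightarrow> (gamma k R)\<^sup>2 = positivity_shift R + frame_coeff k R"
  using positivity_shift_add_frame_coeff_pos[of k R] by (simp add: gamma_def)

lemma gamma_uminus: "gamma (- k) R = gamma k R"
  by (simp add: gamma_def frame_coeff_def)

lemma gamma_le:
  assumes "k \<in> Lambda"
  shows "gamma k R \<le> 3 * (1 + norm R) powr (1/2)"
proof -
  have "gamma k R \<le> sqrt (3\<^sup>2 * (1 + norm R))"
    unfolding gamma_def
    using abs_frame_coeff_less_positivity_shift[OF assms, of R] positivity_shift_le[of R]
    by (intro real_sqrt_le_mono) (simp add: norm_ge_zero)
  also have "\<dots> = sqrt (3\<^sup>2) * sqrt (1 + norm R)"
    by (rule real_sqrt_mult)
  also have "\<dots> = 3 * (1 + norm R) powr (1/2)"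
    by (simp add: powr_half_sqrt)
  finally show ?thesis .
qed

lemma sum_gamma_squared_tf_tensor:
  assumes "R \<in> Msymtf"
  shows "(\<Sum>k\<in>Lambda. (gamma k R)\<^sup>2 *\<^sub>R tf_tensor k k) = R"
proof -
  have "(\<Sum>k\<in>Lambda. (gamma k R)\<^sup>2 *\<^sub>R tf_tensor k k) =
      positivity_shift R *\<^sub>R (\<Sum>k\<in>Lambda. tf_tensor k k) + (\<Sum>k\<in>Lambda. frame_coeff k R *\<^sub>R tf_tensor k k)"
    by (simp add: gamma_squared scaleR_add_left sum.distrib scaleR_sum_right)
  then show ?thesis
    by (simp add: sum_tf_tensor_Lambda sum_frame_coeff_tf_tensor[OF assms])
qed

lemma elementary_smooth_gamma:
  assumes "k \<in> Lambda"
  shows "elementary_smooth (gamma k)"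
proof -
  have "elementary_smooth positivity_shift"
    unfolding positivity_shift_def[abs_def] power2_eq_square
    by (intro elementary_smooth.mult elementary_smooth.const elementary_smooth_sqrt elementary_smooth.add
        elementary_smooth_entry) (simp add: add_pos_nonneg)
  moreover have "elementary_smooth (frame_coeff k)"
    unfolding frame_coeff_def[abs_def]
    by (intro elementary_smooth.mult elementary_smooth.const elementary_smooth.add elementary_smooth_entry)
  ultimately show ?thesis
    unfolding gamma_def[abs_def] using positivity_shift_add_frame_coeff_pos[OF assms]
    by (intro elementary_smooth_sqrt elementary_smooth.add)
qed

theorem lemma4p1:
  shows "\<exists>(\<gamma> :: real^2 \<Rightarrow> real^2^2 \<Rightarrow> real) (C :: real).
    (\<forall>k\<in>Lambda. smooth_on_subspace Msymtf (\<gamma> k) \<and> (\<forall>R\<in>Msymtf. \<gamma> k R > 0)) \<and>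
    (\<forall>k\<in>Lambda. \<forall>R\<in>Msymtf. \<gamma> (-k) R = \<gamma> k R) \<and>
    (\<forall>R\<in>Msymtf. R = (\<Sum>k\<in>Lambda. (\<gamma> k R)\<^sup>2 *\<^sub>R tf_tensor k k)) \<and>
    (\<forall>k\<in>Lambda. \<forall>R\<in>Msymtf. \<gamma> k R \<le> C * (1 + norm R) powr (1/2))"
proof (intro exI[of _ gamma] exI[of _ 3] conjI ballI)
  fix k assume "k \<in> Lambda"
  then show "smooth_on_subspace Msymtf (gamma k)"
    by (intro elementary_smooth_imp_smooth_on_subspace elementary_smooth_gamma)
  fix R :: "real^2^2"
  show "0 < gamma k R" using \<open>k \<in> Lambda\<close> by (rule gamma_pos)
  show "gamma (- k) R = gamma k R" by (rule gamma_uminus)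
  show "gamma k R \<le> 3 * (1 + norm R) powr (1/2)" using \<open>k \<in> Lambda\<close> by (rule gamma_le)
next
  fix R :: "real^2^2" assume "R \<in> Msymtf"
  then show "R = (\<Sum>k\<in>Lambda. (gamma k R)\<^sup>2 *\<^sub>R tf_tensor k k)"
    by (simp add: sum_gamma_squared_tf_tensor)
qed

end
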